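(* Let $F_2$ be the free group on $\{x,y\}$, $\sigma = (\{x\}, y)$, $\tau = (\{y\}, x)$, and let $u, v \in F_2$. Let $m$ be a positive integer and let $\Lambda$ be the set of all chains of the form $\tau^{m_k}\sigma^{l_k} \cdots \tau^{m_1}\sigma^{l_1}$ or $\tau^{-m_k}\sigma^{-l_k} \cdots \tau^{-m_1}\sigma^{-l_1}$ ($k \in \mathbb{N}$, all $l_i, m_i \ge 0$) of length $\sum_{i=1}^k (l_i+m_i) \le m$. Suppose that $\|\psi(u)\| = \|\psi(v)\|$ for every $\psi \in \Lambda$. Then $n([\psi(u)]; x) = n([\psi(v)]; x)$ and $n([\psi(u)]; y) = n([\psi(v)]; y)$ for every $\psi \in \Lambda$.
   Context: $\sigma$ is the automorphism with $\sigma(x) = xy$, $\sigma(y) = y$; $\tau$ is the automorphism with $\tau(y) = yx$, $\tau(x) = x$. For $w \in F_2$, $[w]$ denotes the cyclic word associated with $w$ (the set of cyclic permutations of a cyclically reduced word conjugate to $w$), and $\|w\|$ is its length. For a cyclic word $w$ and a letter $a \in \{x^{\pm1},y^{\pm1}\}$, $n(w;a)$ denotes the total number of occurrences of $a$ and $a^{-1}$ in $w$. *)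

theory Defs
  imports Main
begin

text \<open>A letter is a generator together with
  a flag telling whether it is inverted. An element of F_2 is represented by any
  word; all notions below depend only on the free reduction of the word.\<close>

datatype gen = X | Y

type_synonym letter = "gen \<times> bool"   (* (g, True) = g^{-1} *)

definition inv_letter :: "letter \<Rightarrow> letter" where
  "inv_letter a = (fst a, \<not> snd a)"

definition cons_red :: "letter \<Rightarrow> letter list \<Rightarrow> letter list" where
  "cons_red a w = (case w of [] \<Rightarrow> [a]
      | b # w' \<Rightarrow> (if b = inv_letter a then w' else a # w))"

definition reduce :: "letter list \<Rightarrow> letter list" where
  "reduce w = foldr cons_red w []"

definition inv_word :: "letter list \<Rightarrow> letter list" where
  "inv_word w = rev (map inv_letter w)"

definition subst :: "(gen \<Rightarrow> letter list) \<Rightarrow> letter list \<Rightarrow> letter list" where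
  "subst f w = reduce (concat (map (\<lambda>a. if snd a then inv_word (f (fst a)) else f (fst a)) w))"

definition sigma :: "letter list \<Rightarrow> letter list" where
  "sigma = subst (\<lambda>g. case g of X \<Rightarrow> [(X,False),(Y,False)] | Y \<Rightarrow> [(Y,False)])"
definition sigma_inv :: "letter list \<Rightarrow> letter list" where
  "sigma_inv = subst (\<lambda>g. case g of X \<Rightarrow> [(X,False),(Y,True)] | Y \<Rightarrow> [(Y,False)])"
definition tau :: "letter list \<Rightarrow> letter list" where
  "tau = subst (\<lambda>g. case g of X \<Rightarrow> [(X,False)] | Y \<Rightarrow> [(Y,False),(X,False)])"
definition tau_inv :: "letter list \<Rightarrow> letter list" where
  "tau_inv = subst (\<lambda>g. case g of X \<Rightarrow> [(X,False)] | Y \<Rightarrow> [(Y,False),(X,True)])"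

text \<open>Chains. A list [(l_1,m_1),...,(l_k,m_k)] encodes
  tau^{m_k} sigma^{l_k} ... tau^{m_1} sigma^{l_1} (positive chain) resp.
  tau^{-m_k} sigma^{-l_k} ... tau^{-m_1} sigma^{-l_1} (negative chain).\<close>
definition chain_pos :: "(nat \<times> nat) list \<Rightarrow> letter list \<Rightarrow> letter list" where
  "chain_pos ps = fold (\<lambda>(l,m) f. (tau ^^ m) \<circ> (sigma ^^ l) \<circ> f) ps id"
definition chain_neg :: "(nat \<times> nat) list \<Rightarrow> letter list \<Rightarrow> letter list" where
  "chain_neg ps = fold (\<lambda>(l,m) f. (tau_inv ^^ m) \<circ> (sigma_inv ^^ l) \<circ> f) ps id"

definition chain_length :: "(nat \<times> nat) list \<Rightarrow> nat" where
  "chain_length ps = (\<Sum>p\<leftarrow>ps. fst p + snd p)"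

definition Lambda :: "nat \<Rightarrow> (letter list \<Rightarrow> letter list) set" where
  "Lambda m = {chain_pos ps | ps. chain_length ps \<le> m} \<union> {chain_neg ps | ps. chain_length ps \<le> m}"

definition cyc_step :: "letter list \<Rightarrow> letter list" where
  "cyc_step w = (if 2 \<le> length w \<and> hd w = inv_letter (last w) then butlast (tl w) else w)"
definition cyc_reduce :: "letter list \<Rightarrow> letter list" where
  "cyc_reduce w = (let r = reduce w in (cyc_step ^^ length r) r)"

definition cyc_len :: "letter list \<Rightarrow> nat" where
  "cyc_len w = length (cyc_reduce w)"

definition n_occ :: "letter list \<Rightarrow> gen \<Rightarrow> nat" where
  "n_occ w g = length (filter (\<lambda>a. fst a = g) (cyc_reduce w))"

end

theory Submission
  imports Defs "HOL-Library.Multiset"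
begin

text \<open>
  For a cyclically reduced word \<open>c\<close> with \<open>n\<^sub>x\<close> letters \<open>x\<^sup>\<plusminus>\<^sup>1\<close>,
  \<open>n\<^sub>y\<close> letters \<open>y\<^sup>\<plusminus>\<^sup>1\<close> and \<open>k\<close> cyclic occurrences of the factors
  \<open>xy\<^sup>-\<^sup>1\<close> and \<open>yx\<^sup>-\<^sup>1\<close>, the images under \<open>\<sigma>\<close> and \<open>\<tau>\<close> cancel exactly
  at these factors, two letters each, so
  \<open>\<parallel>\<sigma>(c)\<parallel> = 2n\<^sub>x + n\<^sub>y - 2k\<close> and \<open>\<parallel>\<tau>(c)\<parallel> = n\<^sub>x + 2n\<^sub>y - 2k\<close>.
  Hence \<open>\<parallel>\<sigma>(w)\<parallel> - \<parallel>\<tau>(w)\<parallel> = n\<^sub>x - n\<^sub>y\<close>, which together with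
  \<open>\<parallel>w\<parallel> = n\<^sub>x + n\<^sub>y\<close> recovers both letter counts from lengths.
  Moreover \<open>\<sigma>\<^sup>\<plusminus>\<^sup>1\<close> preserves \<open>n\<^sub>x\<close> and \<open>\<tau>\<^sup>\<plusminus>\<^sup>1\<close> preserves \<open>n\<^sub>y\<close>; so,
  by induction on the length of a chain, the preserved count is inherited from the
  shorter chain and the other one is the cyclic length minus it.

  Cyclic lengths of images are computed from free reductions of images of the
  doubled word: the cyclic reduction of \<open>z\<close> is what the reduction of \<open>zz\<close> has
  beyond that of \<open>z\<close>.
\<close>

section \<open>Free and cyclic reduction\<close>

lemma inv_letter_Pair [simp]: "inv_letter (g, s) = (g, \<not> s)"
  by (simp add: inv_letter_def)

lemma inv_letter_inv_letter [simp]: "inv_letter (inv_letter a) = a"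
  by (cases a) simp

lemma inv_letter_eq_iff [simp]: "inv_letter a = inv_letter b \<longleftrightarrow> a = b"
  by (metis inv_letter_inv_letter)

fun reduced :: "letter list \<Rightarrow> bool" where
  "reduced (a # b # w) \<longleftrightarrow> b \<noteq> inv_letter a \<and> reduced (b # w)"
| "reduced _ \<longleftrightarrow> True"

lemma reduced_Cons: "reduced (a # w) \<longleftrightarrow> reduced w \<and> (w \<noteq> [] \<longrightarrow> hd w \<noteq> inv_letter a)"
  by (cases w) auto

lemma reduced_append:
  "reduced (xs @ ys) \<longleftrightarrow>
     reduced xs \<and> reduced ys \<and> (xs \<noteq> [] \<longrightarrow> ys \<noteq> [] \<longrightarrow> hd ys \<noteq> inv_letter (last xs))"
  by (induction xs rule: reduced.induct) (auto simp: reduced_Cons)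

lemma reduce_Nil [simp]: "reduce [] = []"
  by (simp add: reduce_def)

lemma reduce_Cons: "reduce (a # w) = cons_red a (reduce w)"
  by (simp add: reduce_def)

lemma reduced_cons_red: "reduced w \<Longrightarrow> reduced (cons_red a w)"
  by (cases w) (auto simp: cons_red_def reduced_Cons)

lemma reduced_reduce [simp]: "reduced (reduce w)"
  by (induction w) (simp_all add: reduce_Cons reduced_cons_red)

lemma cons_red_cancel [simp]: "reduced w \<Longrightarrow> b = inv_letter a \<Longrightarrow> cons_red a (cons_red b w) = w"
  by (cases w) (auto simp: cons_red_def reduced_Cons split: list.splits)

lemma reduce_reduced: "reduced w \<Longrightarrow> reduce w = w"
  by (induction w) (auto simp: reduce_Cons reduced_Cons cons_red_def split: list.splits)

lemma reduce_reduce [simp]: "reduce (reduce w) = reduce w"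
  by (simp add: reduce_reduced)

lemma reduce_cons_red_append: "reduce (cons_red a r @ ys) = reduce (a # r @ ys)"
proof (cases "r \<noteq> [] \<and> hd r = inv_letter a")
  case True
  then obtain r' where "r = inv_letter a # r'" "cons_red a r = r'"
    by (cases r) (auto simp: cons_red_def)
  then show ?thesis by (simp add: reduce_Cons)
next
  case False
  then have "cons_red a r = a # r" by (cases r) (auto simp: cons_red_def)
  then show ?thesis by simp
qed

lemma reduce_append_reduce_left: "reduce (reduce xs @ ys) = reduce (xs @ ys)"
  by (induction xs) (simp_all add: reduce_Cons reduce_cons_red_append)

lemma reduce_append: "reduce (xs @ ys) = foldr cons_red xs (reduce ys)"
  by (simp add: reduce_def)

lemma reduce_append_reduce_right: "reduce (xs @ reduce ys) = reduce (xs @ ys)"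
  by (simp add: reduce_append)

lemma inv_word_Nil [simp]: "inv_word [] = []"
  by (simp add: inv_word_def)

lemma inv_word_Cons [simp]: "inv_word (a # w) = inv_word w @ [inv_letter a]"
  by (simp add: inv_word_def)

lemma inv_word_append [simp]: "inv_word (xs @ ys) = inv_word ys @ inv_word xs"
  by (simp add: inv_word_def)

lemma inv_word_inv_word [simp]: "inv_word (inv_word w) = w"
  by (simp add: inv_word_def rev_map comp_def)

lemma last_inv_word: "w \<noteq> [] \<Longrightarrow> last (inv_word w) = inv_letter (hd w)"
  by (simp add: inv_word_def last_rev hd_map)

lemma reduce_append_inv_word_cancel: "reduce (xs @ inv_word xs @ ys) = reduce ys"
proof (induction xs arbitrary: ys)
  case (Cons a xs)
  have "reduce ((a # xs) @ inv_word (a # xs) @ ys)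
      = cons_red a (reduce (xs @ inv_word xs @ inv_letter a # ys))"
    by (simp add: reduce_Cons)
  also have "\<dots> = reduce ys"
    by (simp add: Cons.IH reduce_Cons)
  finally show ?case .
qed simp

lemma reduce_inv_word_append_cancel: "reduce (inv_word xs @ xs @ ys) = reduce ys"
  using reduce_append_inv_word_cancel[of "inv_word xs"] by simp

definition cyc_reduced :: "letter list \<Rightarrow> bool" where
  "cyc_reduced c \<longleftrightarrow> reduced c \<and> (c \<noteq> [] \<longrightarrow> hd c \<noteq> inv_letter (last c))"

lemma cyc_reduced_imp_reduced: "cyc_reduced c \<Longrightarrow> reduced c"
  by (simp add: cyc_reduced_def)

lemma funpow_cyc_step_conj:
  assumes "cyc_reduced c" and "length g \<le> n"
  shows "(cyc_step ^^ n) (g @ c @ inv_word g) = c"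
  using assms(2)
proof (induction g arbitrary: n)
  case Nil
  have "cyc_step c = c"
    using assms(1) by (auto simp: cyc_step_def cyc_reduced_def)
  then show ?case by (induction n) simp_all
next
  case (Cons a g)
  then obtain n' where "n = Suc n'" "length g \<le> n'" by (cases n) auto
  moreover have "cyc_step ((a # g) @ c @ inv_word (a # g)) = g @ c @ inv_word g"
    by (simp add: cyc_step_def butlast_append)
  ultimately show ?case using Cons.IH by (simp add: funpow_Suc_right del: funpow.simps)
qed

lemma cyc_reduce_conj:
  "reduced (g @ c @ inv_word g) \<Longrightarrow> cyc_reduced c \<Longrightarrow> cyc_reduce (g @ c @ inv_word g) = c"
  by (simp add: cyc_reduce_def reduce_reduced funpow_cyc_step_conj)

lemma cyc_reduce_cyc_reduced: "cyc_reduced c \<Longrightarrow> cyc_reduce c = c"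
  using cyc_reduce_conj[of "[]" c] by (simp add: cyc_reduced_def)

lemma cyc_reduce_reduce [simp]: "cyc_reduce (reduce w) = cyc_reduce w"
  by (simp add: cyc_reduce_def)

lemma reduced_conj_decomp:
  "reduced r \<Longrightarrow> \<exists>g c. r = g @ c @ inv_word g \<and> cyc_reduced c"
proof (induction "length r" arbitrary: r rule: less_induct)
  case less
  show ?case
  proof (cases "cyc_reduced r")
    case True
    then show ?thesis by (intro exI[of _ "[]"] exI[of _ r]) simp
  next
    case False
    with less.prems have "r \<noteq> []" and hd_r: "hd r = inv_letter (last r)"
      by (auto simp: cyc_reduced_def)
    then have "tl r \<noteq> []" by (cases r) auto
    with \<open>r \<noteq> []\<close> have "r = hd r # butlast (tl r) @ [last r]" by (cases r) auto
    with hd_r obtain a r' where r: "r = a # r' @ [inv_letter a]"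
      by (metis inv_letter_inv_letter)
    then have "reduced r'"
      using less.prems by (simp add: reduced_append reduced_Cons)
    moreover have "length r' < length r" using r by simp
    ultimately obtain g c where "r' = g @ c @ inv_word g" "cyc_reduced c"
      using less.hyps by blast
    then show ?thesis using r by (intro exI[of _ "a # g"] exI[of _ c]) simp
  qed
qed

lemma cyc_reduced_cyc_reduce: "cyc_reduced (cyc_reduce w)"
  and reduce_conj_cyc_reduce: "\<exists>g. reduce w = g @ cyc_reduce w @ inv_word g"
proof -
  obtain g c where d: "reduce w = g @ c @ inv_word g" "cyc_reduced c"
    using reduced_conj_decomp[OF reduced_reduce] by blast
  then have "cyc_reduce w = c"
    by (metis cyc_reduce_conj cyc_reduce_reduce reduced_reduce)
  with d show "cyc_reduced (cyc_reduce w)" "\<exists>g. reduce w = g @ cyc_reduce w @ inv_word g"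
    by auto
qed

lemma reduce_append_reduce_middle: "reduce (xs @ reduce ys @ zs) = reduce (xs @ ys @ zs)"
  by (metis reduce_append_reduce_left reduce_append_reduce_right)

lemma reduced_infixD: "reduced (xs @ ys @ zs) \<Longrightarrow> reduced ys"
  by (simp add: reduced_append)

lemma reduced_wrap:
  "reduced w \<Longrightarrow> w \<noteq> [] \<Longrightarrow> hd w \<noteq> inv_letter a \<Longrightarrow> last w \<noteq> a
    \<Longrightarrow> reduced (a # w @ [inv_letter a])"
  by (simp add: reduced_Cons reduced_append)

lemma reduce_snoc_cancel: "reduce (w @ [a, inv_letter a]) = reduce w"
  using reduce_append_reduce_right[of w "[a, inv_letter a]"]
    reduce_append_inv_word_cancel[of "[a]" "[]"] by simp

lemma mset_cyc_reduce_conj_letter_cyc_reduced: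
  assumes c: "cyc_reduced c"
  shows "mset (cyc_reduce (a # c @ [inv_letter a])) = mset c"
proof -
  consider "c = []" | c' where "c = inv_letter a # c'"
    | c'' where "hd c \<noteq> inv_letter a" "c = c'' @ [a]"
    | "c \<noteq> []" "hd c \<noteq> inv_letter a" "last c \<noteq> a"
    by (metis append_butlast_last_id list.collapse)
  then show ?thesis
  proof cases
    case 1
    then show ?thesis
      using reduce_snoc_cancel[of "[]" a] cyc_reduce_reduce[of "[a, inv_letter a]"]
      by (simp add: cyc_reduce_def)
  next
    case 2
    with c have "cyc_reduced (c' @ [inv_letter a])"
      by (auto simp: cyc_reduced_def reduced_append reduced_Cons hd_append)
    moreover have "reduce (a # c @ [inv_letter a]) = c' @ [inv_letter a]"
      using 2 \<open>cyc_reduced (c' @ [inv_letter a])\<close>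
      by (simp add: reduce_Cons reduce_reduced cyc_reduced_imp_reduced)
    ultimately have "cyc_reduce (a # c @ [inv_letter a]) = c' @ [inv_letter a]"
      by (metis cyc_reduce_reduce cyc_reduce_cyc_reduced)
    then show ?thesis using 2 by simp
  next
    case 3
    with c have "cyc_reduced (a # c'')"
      by (cases c'') (auto simp: cyc_reduced_def reduced_append reduced_Cons)
    moreover have "reduce (a # c @ [inv_letter a]) = a # c''"
      using 3 \<open>cyc_reduced (a # c'')\<close> reduce_snoc_cancel[of "a # c''" a]
      by (simp add: reduce_reduced cyc_reduced_imp_reduced)
    ultimately have "cyc_reduce (a # c @ [inv_letter a]) = a # c''"
      by (metis cyc_reduce_reduce cyc_reduce_cyc_reduced)
    then show ?thesis using 3 by simp
  next
    case 4
    with c have "reduced (a # c @ [inv_letter a])"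
      by (intro reduced_wrap) (simp_all add: cyc_reduced_imp_reduced)
    then have "reduced ([a] @ c @ inv_word [a])"
      by simp
    then show ?thesis using cyc_reduce_conj[of "[a]" c] c by simp
  qed
qed

lemma mset_cyc_reduce_conj_letter: "mset (cyc_reduce (a # z @ [inv_letter a])) = mset (cyc_reduce z)"
proof -
  define c where "c = cyc_reduce z"
  obtain g where g: "reduce z = g @ c @ inv_word g"
    using reduce_conj_cyc_reduce c_def by blast
  have c: "cyc_reduced c"
    using cyc_reduced_cyc_reduce c_def by simp
  have wrap: "cyc_reduce (a # z @ [inv_letter a]) = cyc_reduce (a # (g @ c @ inv_word g) @ [inv_letter a])"
    using reduce_append_reduce_middle[of "[a]" z "[inv_letter a]"] g
    by (metis append_Cons append_Nil cyc_reduce_reduce)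
  have reduced_g: "reduced (g @ c @ inv_word g)"
    using g by (metis reduced_reduce)
  show ?thesis
  proof (cases g)
    case Nil
    then show ?thesis using wrap mset_cyc_reduce_conj_letter_cyc_reduced[OF c] c_def by simp
  next
    case (Cons b g')
    have "cyc_reduce (a # (g @ c @ inv_word g) @ [inv_letter a]) = c"
    proof (cases "b = inv_letter a")
      case True
      have reduced_g': "reduced (g' @ c @ inv_word g')"
        using reduced_g Cons reduced_infixD[of "[b]" "g' @ c @ inv_word g'"] by simp
      then have "reduce (a # (g @ c @ inv_word g) @ [inv_letter a]) = g' @ c @ inv_word g'"
        using Cons True reduce_snoc_cancel[of "g' @ c @ inv_word g'" a]
        by (simp add: reduce_Cons reduce_reduced)
      then show ?thesis using reduced_g'
        by (metis c cyc_reduce_conj cyc_reduce_reduce)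
    next
      case False
      have "last (g @ c @ inv_word g) = inv_letter b"
        using Cons by (simp add: last_inv_word)
      then have "reduced (a # (g @ c @ inv_word g) @ [inv_letter a])"
        using reduced_g Cons False by (intro reduced_wrap) auto
      then have "reduced ((a # g) @ c @ inv_word (a # g))"
        by simp
      then show ?thesis using cyc_reduce_conj[of "a # g" c] c by simp
    qed
    then show ?thesis using wrap c_def by simp
  qed
qed

lemma mset_cyc_reduce_conj: "mset (cyc_reduce (h @ z @ inv_word h)) = mset (cyc_reduce z)"
proof (induction h)
  case (Cons a h)
  have "(a # h) @ z @ inv_word (a # h) = a # (h @ z @ inv_word h) @ [inv_letter a]"
    by simp
  then show ?case using mset_cyc_reduce_conj_letter Cons.IH by metis
qed simp

lemma mset_reduce_square: "mset (reduce (z @ z)) = mset (reduce z) + mset (cyc_reduce z)"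
proof -
  define c where "c = cyc_reduce z"
  obtain g where g: "reduce z = g @ c @ inv_word g"
    using reduce_conj_cyc_reduce c_def by blast
  have c: "cyc_reduced c"
    using cyc_reduced_cyc_reduce c_def by simp
  have "reduce (z @ z) = reduce (g @ c @ (inv_word g @ g @ c @ inv_word g))"
    by (metis g append.assoc reduce_append_reduce_left reduce_append_reduce_right)
  also have "\<dots> = reduce (g @ c @ c @ inv_word g)"
    by (metis append.assoc reduce_append_reduce_right reduce_inv_word_append_cancel)
  finally have zz: "reduce (z @ z) = reduce (g @ c @ c @ inv_word g)" .
  have reduced_g: "reduced (g @ c @ inv_word g)"
    using g by (metis reduced_reduce)
  show ?thesis
  proof (cases "c = []")
    case True
    then have "g = []"
      using reduced_g by (cases g rule: rev_cases) (auto simp: reduced_append)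
    then show ?thesis using zz g True c_def by simp
  next
    case False
    then have "reduced (g @ c @ c @ inv_word g)"
      using reduced_g c by (auto simp: reduced_append cyc_reduced_def)
    then show ?thesis using zz g c_def by (simp add: reduce_reduced)
  qed
qed

section \<open>Images under endomorphisms\<close>

definition letter_image :: "(gen \<Rightarrow> letter list) \<Rightarrow> letter \<Rightarrow> letter list" where
  "letter_image f a = (if snd a then inv_word (f (fst a)) else f (fst a))"

definition word_image :: "(gen \<Rightarrow> letter list) \<Rightarrow> letter list \<Rightarrow> letter list" where
  "word_image f w = concat (map (letter_image f) w)"

lemma subst_eq_reduce_word_image: "subst f w = reduce (word_image f w)"
  by (simp add: subst_def word_image_def letter_image_def[abs_def])

lemma word_image_Nil [simp]: "word_image f [] = []"
  and word_image_Cons [simp]: "word_image f (a # w) = letter_image f a @ word_image f w"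
  and word_image_append [simp]: "word_image f (xs @ ys) = word_image f xs @ word_image f ys"
  by (simp_all add: word_image_def)

lemma letter_image_inv_letter: "letter_image f (inv_letter a) = inv_word (letter_image f a)"
  by (simp add: letter_image_def inv_letter_def)

lemma word_image_inv_word: "word_image f (inv_word w) = inv_word (word_image f w)"
  by (induction w) (simp_all add: letter_image_inv_letter)

lemma reduce_word_image_cons_red:
  "reduce (word_image f (cons_red a r)) = reduce (word_image f (a # r))"
proof (cases "r \<noteq> [] \<and> hd r = inv_letter a")
  case True
  then obtain r' where "r = inv_letter a # r'" "cons_red a r = r'"
    by (cases r) (auto simp: cons_red_def)
  then show ?thesis
    by (simp add: letter_image_inv_letter reduce_append_inv_word_cancel)
next
  case False
  then have "cons_red a r = a # r" by (cases r) (auto simp: cons_red_def)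
  then show ?thesis by simp
qed

lemma reduce_word_image_reduce: "reduce (word_image f (reduce w)) = reduce (word_image f w)"
proof (induction w)
  case (Cons a w)
  have "reduce (word_image f (reduce (a # w))) = reduce (word_image f (a # reduce w))"
    by (simp add: reduce_Cons reduce_word_image_cons_red)
  also have "\<dots> = reduce (letter_image f a @ reduce (word_image f (reduce w)))"
    by (simp add: reduce_append_reduce_right)
  also have "\<dots> = reduce (word_image f (a # w))"
    by (simp add: Cons.IH reduce_append_reduce_right)
  finally show ?case .
qed simp

lemma mset_cyc_reduce_subst:
  "mset (cyc_reduce (subst f w)) = mset (cyc_reduce (word_image f (cyc_reduce w)))"
proof -
  obtain g where g: "reduce w = g @ cyc_reduce w @ inv_word g"
    using reduce_conj_cyc_reduce by blast
  have "cyc_reduce (subst f w) = cyc_reduce (word_image f (reduce w))"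
    by (metis subst_eq_reduce_word_image cyc_reduce_reduce reduce_word_image_reduce)
  also have "\<dots> = cyc_reduce (word_image f g @ word_image f (cyc_reduce w) @ inv_word (word_image f g))"
    by (simp add: g word_image_inv_word)
  finally show ?thesis
    using mset_cyc_reduce_conj by simp
qed

lemma subst_subst_eq_reduce:
  assumes "\<And>a. reduce (word_image f (letter_image g a)) = [a]"
  shows "subst f (subst g w) = reduce w"
proof -
  have "reduce (word_image f (word_image g w)) = reduce w"
  proof (induction w)
    case (Cons a w)
    have "reduce (word_image f (word_image g (a # w)))
        = reduce (reduce (word_image f (letter_image g a)) @ reduce (word_image f (word_image g w)))"
      by (simp add: reduce_append_reduce_left reduce_append_reduce_right)
    also have "\<dots> = reduce (a # w)"
      using reduce_append_reduce_right[of "[a]" w] by (simp add: assms Cons.IH)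
    finally show ?case .
  qed simp
  then show ?thesis
    by (simp add: subst_eq_reduce_word_image reduce_word_image_reduce)
qed

lemma mset_normal_form_square:
  assumes nf: "\<And>w. reduce (word_image f w) = reduce (nf w)"
    and reduced_nf: "\<And>w. reduced w \<Longrightarrow> reduced (nf w)"
  shows "mset (nf (cyc_reduce w @ cyc_reduce w))
    = mset (nf (cyc_reduce w)) + mset (cyc_reduce (subst f w))"
proof -
  define c where "c = cyc_reduce w"
  have c: "cyc_reduced c"
    using cyc_reduced_cyc_reduce c_def by simp
  then have "reduced (c @ c)"
    by (auto simp: cyc_reduced_def reduced_append)
  then have "reduce (word_image f c @ word_image f c) = nf (c @ c)"
    using nf[of "c @ c"] reduced_nf by (simp add: reduce_reduced)
  moreover have "reduce (word_image f c) = nf c"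
    using nf[of c] reduced_nf c by (simp add: reduce_reduced cyc_reduced_imp_reduced)
  ultimately show ?thesis
    using mset_reduce_square[of "word_image f c"] mset_cyc_reduce_subst[of f w] c_def by simp
qed

section \<open>Cyclic lengths of images under \<open>\<sigma>\<close> and \<open>\<tau>\<close>\<close>

definition gen_count :: "gen \<Rightarrow> letter list \<Rightarrow> nat" where
  "gen_count g w = length (filter (\<lambda>a. fst a = g) w)"

lemma gen_count_simps [simp]:
  "gen_count g [] = 0"
  "gen_count g (a # w) = (if fst a = g then 1 else 0) + gen_count g w"
  "gen_count g (xs @ ys) = gen_count g xs + gen_count g ys"
  by (simp_all add: gen_count_def)

lemma gen_count_eq_size_mset: "gen_count g w = size (filter_mset (\<lambda>a. fst a = g) (mset w))"
  by (simp add: gen_count_def flip: mset_filter)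

lemma gen_count_X_Y: "gen_count X w + gen_count Y w = length w"
proof (induction w)
  case (Cons a w)
  then show ?case by (cases "fst a") auto
qed simp

lemma n_occ_eq_gen_count: "n_occ w g = gen_count g (cyc_reduce w)"
  by (simp add: n_occ_def gen_count_def)

lemma n_occ_X_Y: "n_occ w X + n_occ w Y = cyc_len w"
  by (simp add: n_occ_eq_gen_count cyc_len_def gen_count_X_Y)

lemma n_occ_reduce [simp]: "n_occ (reduce w) g = n_occ w g"
  by (simp add: n_occ_eq_gen_count)

lemma gen_neq_iff: "(g::gen) \<noteq> X \<longleftrightarrow> g = Y" "(g::gen) \<noteq> Y \<longleftrightarrow> g = X"
  by (cases g; simp)+

text \<open>Occurrences of the factors \<open>xy\<^sup>-\<^sup>1\<close> and \<open>yx\<^sup>-\<^sup>1\<close>: exactly where both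
  \<open>\<sigma>\<close> and \<open>\<tau>\<close> cancel two letters of the image of a reduced word.\<close>

fun cancel_count :: "letter list \<Rightarrow> nat" where
  "cancel_count ((X, False) # (Y, True) # w) = Suc (cancel_count w)"
| "cancel_count ((Y, False) # (X, True) # w) = Suc (cancel_count w)"
| "cancel_count (a # w) = cancel_count w"
| "cancel_count [] = 0"

definition sigma_gen :: "gen \<Rightarrow> letter list" where
  "sigma_gen g = (case g of X \<Rightarrow> [(X,False),(Y,False)] | Y \<Rightarrow> [(Y,False)])"

lemma sigma_eq_subst: "sigma = subst sigma_gen"
  by (simp add: sigma_def sigma_gen_def[abs_def])

fun sigma_nf :: "letter list \<Rightarrow> letter list" where
  "sigma_nf [] = []"
| "sigma_nf ((X,False) # (Y,True) # w) = (X,False) # sigma_nf w"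
| "sigma_nf ((X,False) # w) = (X,False) # (Y,False) # sigma_nf w"
| "sigma_nf ((Y,False) # (X,True) # w) = (X,True) # sigma_nf w"
| "sigma_nf ((X,True) # w) = (Y,True) # (X,True) # sigma_nf w"
| "sigma_nf ((Y,False) # w) = (Y,False) # sigma_nf w"
| "sigma_nf ((Y,True) # w) = (Y,True) # sigma_nf w"

definition sigma_nf_heads :: "letter \<Rightarrow> letter set" where
  "sigma_nf_heads a =
    (if a = (X,False) then {(X,False)} else if a = (X,True) then {(Y,True)}
     else if a = (Y,False) then {(Y,False),(X,True)} else {(Y,True)})"

lemma reduce_word_image_sigma_gen: "reduce (word_image sigma_gen w) = reduce (sigma_nf w)"
  by (induction w rule: sigma_nf.induct)
    (simp_all add: reduce_Cons reduced_cons_red sigma_gen_def letter_image_def inv_word_def)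

lemma sigma_nf_eq_Nil_iff: "sigma_nf w = [] \<longleftrightarrow> w = []"
  by (induction w rule: sigma_nf.induct) auto

lemma reduced_sigma_nf_hd:
  "reduced w \<Longrightarrow> reduced (sigma_nf w) \<and> (w \<noteq> [] \<longrightarrow> hd (sigma_nf w) \<in> sigma_nf_heads (hd w))"
  by (induction w rule: sigma_nf.induct)
    (auto simp: reduced_Cons sigma_nf_eq_Nil_iff sigma_nf_heads_def gen_neq_iff split: if_splits)

lemma length_sigma_nf: "length (sigma_nf w) + 2 * cancel_count w = 2 * gen_count X w + gen_count Y w"
  by (induction w rule: sigma_nf.induct) simp_all

lemma gen_count_sigma_nf: "gen_count X (sigma_nf w) = gen_count X w"
  by (induction w rule: sigma_nf.induct) simp_all

definition tau_gen :: "gen \<Rightarrow> letter list" where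
  "tau_gen g = (case g of X \<Rightarrow> [(X,False)] | Y \<Rightarrow> [(Y,False),(X,False)])"

lemma tau_eq_subst: "tau = subst tau_gen"
  by (simp add: tau_def tau_gen_def[abs_def])

fun tau_nf :: "letter list \<Rightarrow> letter list" where
  "tau_nf [] = []"
| "tau_nf ((Y,False) # (X,True) # w) = (Y,False) # tau_nf w"
| "tau_nf ((Y,False) # w) = (Y,False) # (X,False) # tau_nf w"
| "tau_nf ((X,False) # (Y,True) # w) = (Y,True) # tau_nf w"
| "tau_nf ((Y,True) # w) = (X,True) # (Y,True) # tau_nf w"
| "tau_nf ((X,False) # w) = (X,False) # tau_nf w"
| "tau_nf ((X,True) # w) = (X,True) # tau_nf w"

definition tau_nf_heads :: "letter \<Rightarrow> letter set" where
  "tau_nf_heads a =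
    (if a = (X,False) then {(X,False),(Y,True)} else if a = (X,True) then {(X,True)}
     else if a = (Y,False) then {(Y,False)} else {(X,True)})"

lemma reduce_word_image_tau_gen: "reduce (word_image tau_gen w) = reduce (tau_nf w)"
  by (induction w rule: tau_nf.induct)
    (simp_all add: reduce_Cons reduced_cons_red tau_gen_def letter_image_def inv_word_def)

lemma tau_nf_eq_Nil_iff: "tau_nf w = [] \<longleftrightarrow> w = []"
  by (induction w rule: tau_nf.induct) auto

lemma reduced_tau_nf_hd:
  "reduced w \<Longrightarrow> reduced (tau_nf w) \<and> (w \<noteq> [] \<longrightarrow> hd (tau_nf w) \<in> tau_nf_heads (hd w))"
  by (induction w rule: tau_nf.induct)
    (auto simp: reduced_Cons tau_nf_eq_Nil_iff tau_nf_heads_def gen_neq_iff split: if_splits)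

lemma length_tau_nf: "length (tau_nf w) + 2 * cancel_count w = gen_count X w + 2 * gen_count Y w"
  by (induction w rule: tau_nf.induct) simp_all

lemma gen_count_tau_nf: "gen_count Y (tau_nf w) = gen_count Y w"
  by (induction w rule: tau_nf.induct) simp_all

lemma reduced_sigma_nf: "reduced w \<Longrightarrow> reduced (sigma_nf w)"
  using reduced_sigma_nf_hd by blast

lemma reduced_tau_nf: "reduced w \<Longrightarrow> reduced (tau_nf w)"
  using reduced_tau_nf_hd by blast

lemma length_sigma_nf_tau_nf:
  "length (sigma_nf w) + gen_count Y w = length (tau_nf w) + gen_count X w"
  using length_sigma_nf[of w] length_tau_nf[of w] by simp

lemma mset_sigma_nf_square:
  "mset (sigma_nf (cyc_reduce w @ cyc_reduce w))
    = mset (sigma_nf (cyc_reduce w)) + mset (cyc_reduce (sigma w))"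
  unfolding sigma_eq_subst
  using reduce_word_image_sigma_gen reduced_sigma_nf by (rule mset_normal_form_square)

lemma mset_tau_nf_square:
  "mset (tau_nf (cyc_reduce w @ cyc_reduce w))
    = mset (tau_nf (cyc_reduce w)) + mset (cyc_reduce (tau w))"
  unfolding tau_eq_subst
  using reduce_word_image_tau_gen reduced_tau_nf by (rule mset_normal_form_square)

lemma n_occ_sigma: "n_occ (sigma w) X = n_occ w X"
  using arg_cong[OF mset_sigma_nf_square, of "\<lambda>M. size (filter_mset (\<lambda>a. fst a = X) M)"]
  by (simp add: n_occ_eq_gen_count gen_count_sigma_nf flip: gen_count_eq_size_mset)

lemma n_occ_tau: "n_occ (tau w) Y = n_occ w Y"
  using arg_cong[OF mset_tau_nf_square, of "\<lambda>M. size (filter_mset (\<lambda>a. fst a = Y) M)"]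
  by (simp add: n_occ_eq_gen_count gen_count_tau_nf flip: gen_count_eq_size_mset)

lemma cyc_len_sigma_tau: "cyc_len (sigma w) + n_occ w Y = cyc_len (tau w) + n_occ w X"
proof -
  define c where "c = cyc_reduce w"
  have "length (sigma_nf (c @ c)) = length (sigma_nf c) + cyc_len (sigma w)"
    using arg_cong[OF mset_sigma_nf_square[of w], of size] by (simp add: c_def cyc_len_def)
  moreover have "length (tau_nf (c @ c)) = length (tau_nf c) + cyc_len (tau w)"
    using arg_cong[OF mset_tau_nf_square[of w], of size] by (simp add: c_def cyc_len_def)
  ultimately show ?thesis
    using length_sigma_nf_tau_nf[of c] length_sigma_nf_tau_nf[of "c @ c"]
    by (simp add: n_occ_eq_gen_count c_def)
qed

lemma sigma_sigma_inv: "sigma (sigma_inv w) = reduce w"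
  unfolding sigma_eq_subst sigma_inv_def
  by (rule subst_subst_eq_reduce)
    (auto simp: letter_image_def sigma_gen_def reduce_Cons cons_red_def split: gen.split)

lemma tau_tau_inv: "tau (tau_inv w) = reduce w"
  unfolding tau_eq_subst tau_inv_def
  by (rule subst_subst_eq_reduce)
    (auto simp: letter_image_def tau_gen_def reduce_Cons cons_red_def split: gen.split)

lemma n_occ_sigma_inv: "n_occ (sigma_inv w) X = n_occ w X"
  by (metis n_occ_sigma n_occ_reduce sigma_sigma_inv)

lemma n_occ_tau_inv: "n_occ (tau_inv w) Y = n_occ w Y"
  by (metis n_occ_tau n_occ_reduce tau_tau_inv)

section \<open>Chains\<close>

definition chain_of :: "(letter list \<Rightarrow> letter list) \<Rightarrow> (letter list \<Rightarrow> letter list)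
    \<Rightarrow> (nat \<times> nat) list \<Rightarrow> letter list \<Rightarrow> letter list" where
  "chain_of s t ps = fold (\<lambda>(l, k) f. (t ^^ k) \<circ> (s ^^ l) \<circ> f) ps id"

lemma chain_pos_eq_chain_of: "chain_pos = chain_of sigma tau"
  and chain_neg_eq_chain_of: "chain_neg = chain_of sigma_inv tau_inv"
  by (simp_all add: chain_pos_def chain_neg_def chain_of_def fun_eq_iff)

lemma chain_of_snoc: "chain_of s t (ps @ [(l, k)]) = (t ^^ k) \<circ> (s ^^ l) \<circ> chain_of s t ps"
  by (simp add: chain_of_def)

lemma chain_length_snoc: "chain_length (ps @ [(l, k)]) = chain_length ps + l + k"
  by (simp add: chain_length_def)

lemma chain_of_length_0: "chain_length ps = 0 \<Longrightarrow> chain_of s t ps = id"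
proof (induction ps rule: rev_induct)
  case (snoc p ps)
  then show ?case by (cases p) (simp add: chain_of_snoc chain_length_snoc)
qed (simp add: chain_of_def)

lemma chain_of_length_Suc:
  assumes "chain_length ps = Suc n"
  shows "\<exists>f ps'. f \<in> {s, t} \<and> chain_length ps' = n \<and> chain_of s t ps = f \<circ> chain_of s t ps'"
  using assms
proof (induction ps rule: rev_induct)
  case Nil
  then show ?case by (simp add: chain_length_def)
next
  case (snoc p ps)
  obtain l k where p: "p = (l, k)" by (cases p)
  consider k' where "k = Suc k'" | l' where "k = 0" "l = Suc l'" | "k = 0" "l = 0"
    by (cases k; cases l) auto
  then show ?case
  proof cases
    case (1 k')
    then show ?thesis using snoc.prems p
      by (intro exI[of _ t] exI[of _ "ps @ [(l, k')]"])
        (simp add: chain_of_snoc chain_length_snoc)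
  next
    case (2 l')
    then show ?thesis using snoc.prems p
      by (intro exI[of _ s] exI[of _ "ps @ [(l', 0)]"])
        (simp add: chain_of_snoc chain_length_snoc)
  next
    case 3
    then show ?thesis using snoc p by (simp add: chain_of_snoc chain_length_snoc)
  qed
qed

definition same_counts :: "letter list \<Rightarrow> letter list \<Rightarrow> bool" where
  "same_counts w w' \<longleftrightarrow> n_occ w X = n_occ w' X \<and> n_occ w Y = n_occ w' Y"

lemma same_counts_apply:
  assumes "same_counts w w'" and "cyc_len (f w) = cyc_len (f w')"
    and "\<And>w. n_occ (f w) g = n_occ w g"
  shows "same_counts (f w) (f w')"
  using assms n_occ_X_Y[of "f w"] n_occ_X_Y[of "f w'"]
  unfolding same_counts_def by (cases g) simp_all

lemma same_counts_if_cyc_len_sigma_tau: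
  assumes "cyc_len u = cyc_len v" "cyc_len (sigma u) = cyc_len (sigma v)"
    "cyc_len (tau u) = cyc_len (tau v)"
  shows "same_counts u v"
  using assms cyc_len_sigma_tau[of u] cyc_len_sigma_tau[of v] n_occ_X_Y[of u] n_occ_X_Y[of v]
  unfolding same_counts_def by linarith

lemma same_counts_chain_of:
  assumes s: "\<And>w. n_occ (s w) X = n_occ w X" and t: "\<And>w. n_occ (t w) Y = n_occ w Y"
    and uv: "same_counts u v"
    and len: "\<And>ps. chain_length ps \<le> m \<Longrightarrow> cyc_len (chain_of s t ps u) = cyc_len (chain_of s t ps v)"
  shows "chain_length ps \<le> m \<Longrightarrow> same_counts (chain_of s t ps u) (chain_of s t ps v)"
proof (induction "chain_length ps" arbitrary: ps)
  case 0
  then show ?case using uv by (simp add: chain_of_length_0)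
next
  case (Suc n)
  then obtain f ps' where f: "f \<in> {s, t}" and ps': "chain_length ps' = n"
    and chain: "chain_of s t ps = f \<circ> chain_of s t ps'"
    using chain_of_length_Suc by metis
  have "same_counts (chain_of s t ps' u) (chain_of s t ps' v)"
    using Suc ps' by simp
  moreover have "cyc_len (f (chain_of s t ps' u)) = cyc_len (f (chain_of s t ps' v))"
    using len[OF Suc.prems] chain by simp
  ultimately show ?case
    using f s t chain by (auto intro: same_counts_apply)
qed

theorem lemma2p4:
  fixes u v :: "letter list" and m :: nat
  assumes "0 < m"
    and "\<forall>\<psi>\<in>Lambda m. cyc_len (\<psi> u) = cyc_len (\<psi> v)"
  shows "\<forall>\<psi>\<in>Lambda m. n_occ (\<psi> u) X = n_occ (\<psi> v) X \<and> n_occ (\<psi> u) Y = n_occ (\<psi> v) Y"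
proof -
  have Lambda: "Lambda m = {chain_of sigma tau ps |ps. chain_length ps \<le> m}
      \<union> {chain_of sigma_inv tau_inv ps |ps. chain_length ps \<le> m}"
    by (simp add: Lambda_def chain_pos_eq_chain_of chain_neg_eq_chain_of)
  have "chain_of sigma tau [] = id" "chain_of sigma tau [(1, 0)] = sigma"
    "chain_of sigma tau [(0, 1)] = tau"
    by (simp_all add: chain_of_def)
  moreover have "chain_length [] \<le> m" "chain_length [(1, 0)] \<le> m" "chain_length [(0, 1)] \<le> m"
    using \<open>0 < m\<close> by (simp_all add: chain_length_def)
  ultimately have "id \<in> Lambda m" "sigma \<in> Lambda m" "tau \<in> Lambda m"
    unfolding Lambda by (metis (mono_tags, lifting) UnI1 mem_Collect_eq)+
  then have "same_counts u v"
    using assms(2) by (intro same_counts_if_cyc_len_sigma_tau) auto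
  then have "same_counts (\<psi> u) (\<psi> v)" if "\<psi> \<in> Lambda m" for \<psi>
    using that assms(2) unfolding Lambda
    by (auto intro!: same_counts_chain_of n_occ_sigma n_occ_tau n_occ_sigma_inv n_occ_tau_inv)
  then show ?thesis
    unfolding same_counts_def by blast
qed

end
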